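(* Let $(X,d)$ be a compact metric space, $T:X\to X$ a homeomorphism with $F_n(T)<\infty$ for all $n\geqslant1$, and $G$ a finite group acting continuously on $X$ such that $g\circ T=T\circ g$ for all $g\in G$; let $(X',T')$ be the quotient system. Suppose there exists $\eta>0$ with $\limsup_{n\to\infty}\frac1n\log F_n(T)=\eta$. Then \[ \eta\leqslant\limsup_{n\to\infty}\frac1n\log F_n(T')\leqslant\nabla\eta . \]
   Context: The quotient system: $X'=G\backslash X=\{\mathfrak{O}_G(x):x\in X\}$ where $\mathfrak{O}_G(x)=\{g(x):g\in G\}$, with metric $d'(\mathfrak{O}_G(x),\mathfrak{O}_G(y))=\min\{d(x',y'):x'\in\mathfrak{O}_G(x),y'\in\mathfrak{O}_G(y)\}$, and $T'(\mathfrak{O}_G(x))=\mathfrak{O}_G(T(x))$. $F_n(S)=\#\{x:S^n(x)=x\}$. $\nabla=\max\{|\langle g\rangle|:g\in G\}$ is the largest order of an element of $G$. *)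

theory Defs
  imports "HOL-Analysis.Analysis" "HOL-Algebra.Group_Action" "HOL-Algebra.Multiplicative_Group"
          "HOL-Library.Extended_Real" "HOL-Library.Liminf_Limsup"
begin

definition fix_count :: "'b set \<Rightarrow> ('b \<Rightarrow> 'b) \<Rightarrow> nat \<Rightarrow> nat" where
  "fix_count A S n = card {x \<in> A. (S ^^ n) x = x}"

definition quot_space :: "_ \<Rightarrow> ('g \<Rightarrow> 'b \<Rightarrow> 'b) \<Rightarrow> 'b set \<Rightarrow> 'b set set" where
  "quot_space G \<phi> X = orbits G X \<phi>"

definition quot_map :: "_ \<Rightarrow> ('g \<Rightarrow> 'b \<Rightarrow> 'b) \<Rightarrow> ('b \<Rightarrow> 'b) \<Rightarrow> 'b set \<Rightarrow> 'b set" where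
  "quot_map G \<phi> T Orb = orbit G \<phi> (T (SOME x. x \<in> Orb))"

definition max_elem_order :: "_ \<Rightarrow> nat" where
  "max_elem_order G = Max (group.ord G ` carrier G)"

definition growth :: "(nat \<Rightarrow> nat) \<Rightarrow> ereal" where
  "growth F = limsup (\<lambda>n. ereal (ln (real (F n)) / real n))"

end

theory Submission
  imports Defs
begin

text \<open>Every periodic point of \<open>T\<close> gives a periodic orbit of \<open>T'\<close>, and an orbit has at most \<open>|G|\<close>
  points, so \<open>F\<^sub>n(T) \<le> |G| F\<^sub>n(T')\<close>. Conversely, if \<open>T'\<^sup>n\<close> fixes the orbit of \<open>x\<close>, then \<open>T\<^sup>n x = g x\<close>
  for some \<open>g \<in> G\<close>; as \<open>T\<close> commutes with \<open>g\<close>, \<open>T\<^sup>n\<^sup>k x = g\<^sup>k x = x\<close> for the order \<open>k \<le> \<nabla>\<close> of \<open>g\<close>,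
  so \<open>F\<^sub>n(T') \<le> \<Sum>\<^sub>k\<^sub>=\<^sub>1\<^sup>\<nabla> F\<^sub>n\<^sub>k(T)\<close>. A constant factor does not change the exponential growth
  rate, and if \<open>F\<^sub>m(T) \<le> exp(m(\<eta> + \<epsilon>))\<close> eventually, the sum is at most \<open>\<nabla> exp(n\<nabla>(\<eta> + \<epsilon>))\<close>.\<close>

definition periodic_points :: "'b set \<Rightarrow> ('b \<Rightarrow> 'b) \<Rightarrow> nat \<Rightarrow> 'b set" where
  "periodic_points A S n = {x \<in> A. (S ^^ n) x = x}"

lemma fix_count_eq_card_periodic_points: "fix_count A S n = card (periodic_points A S n)"
  unfolding fix_count_def periodic_points_def ..

lemma (in group_action) orbit_action_eq:
  assumes "g \<in> carrier G" and "x \<in> E"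
  shows "orbit G \<phi> (\<phi> g x) = orbit G \<phi> x"
proof -
  have gx: "\<phi> g x \<in> E" "\<phi> g x \<in> orbit G \<phi> x"
    using assms element_image unfolding orbit_def by blast+
  have orbit_subset: "orbit G \<phi> y \<subseteq> E" if "y \<in> E" for y
    using that element_image unfolding orbit_def by blast
  show ?thesis
    using orbit_trans[OF assms(2) gx(1)] orbit_trans[OF gx(1) assms(2)]
      orbit_sym[OF assms(2) gx] gx orbit_subset assms(2) by blast
qed

lemma (in group_action) card_orbit_le:
  assumes "finite (carrier G)"
  shows "card (orbit G \<phi> x) \<le> card (carrier G)"
proof -
  have "orbit G \<phi> x = (\<lambda>g. \<phi> g x) ` carrier G"
    unfolding orbit_def by blast
  then show ?thesis
    using card_image_le assms by simp
qed

lemma (in group) ord_pos: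
  assumes "finite (carrier G)" and "g \<in> carrier G"
  shows "0 < ord g"
  using ord_eq_0[OF assms(2)] pow_order_eq_1[OF assms(2)] assms(1)
  by (auto simp: order_gt_0_iff_finite)

lemma (in group) ord_le_max_elem_order:
  assumes "finite (carrier G)" and "g \<in> carrier G"
  shows "ord g \<le> max_elem_order G"
  unfolding max_elem_order_def using assms by (intro Max_ge) auto

locale equivariant_map = group_action +
  fixes T
  assumes map_closed: "x \<in> E \<Longrightarrow> T x \<in> E"
    and commute: "g \<in> carrier G \<Longrightarrow> x \<in> E \<Longrightarrow> \<phi> g (T x) = T (\<phi> g x)"
begin

lemma funpow_closed: "x \<in> E \<Longrightarrow> (T ^^ n) x \<in> E"
  by (induction n) (auto intro: map_closed)

lemma funpow_commute:
  assumes "g \<in> carrier G" and "x \<in> E"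
  shows "\<phi> g ((T ^^ n) x) = (T ^^ n) (\<phi> g x)"
  by (induction n) (use assms funpow_closed commute in auto)

lemma quot_map_orbit:
  assumes "x \<in> E"
  shows "quot_map G \<phi> T (orbit G \<phi> x) = orbit G \<phi> (T x)"
proof -
  have "(SOME y. y \<in> orbit G \<phi> x) \<in> orbit G \<phi> x"
    using orbit_refl[OF assms] by (rule someI)
  then obtain g where g: "g \<in> carrier G" "(SOME y. y \<in> orbit G \<phi> x) = \<phi> g x"
    unfolding orbit_def by blast
  then have "quot_map G \<phi> T (orbit G \<phi> x) = orbit G \<phi> (\<phi> g (T x))"
    unfolding quot_map_def using assms commute by simp
  also have "\<dots> = orbit G \<phi> (T x)"
    by (rule orbit_action_eq[OF g(1) map_closed[OF assms]])
  finally show ?thesis .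
qed

lemma funpow_quot_map_orbit:
  assumes "x \<in> E"
  shows "(quot_map G \<phi> T ^^ n) (orbit G \<phi> x) = orbit G \<phi> ((T ^^ n) x)"
  by (induction n) (use assms funpow_closed quot_map_orbit in auto)

lemma funpow_mult_eq_action_pow:
  assumes "x \<in> E" and "g \<in> carrier G" and "(T ^^ n) x = \<phi> g x"
  shows "(T ^^ (n * m)) x = \<phi> (g [^]\<^bsub>G\<^esub> m) x"
proof (induction m)
  case 0
  then show ?case
    using assms(1) id_eq_one by (metis mult_0_right funpow_0 nat_pow_0 restrict_apply')
next
  case (Suc m)
  interpret group G
    using group_hom group_hom.axioms(1) by blast
  have "(T ^^ (n * Suc m)) x = (T ^^ (n * m)) ((T ^^ n) x)"
    by (metis funpow_add comp_apply mult_Suc_right add.commute)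
  also have "\<dots> = \<phi> g ((T ^^ (n * m)) x)"
    using assms funpow_commute by simp
  also have "\<dots> = \<phi> (g \<otimes> g [^] m) x"
    using Suc assms(1,2) composition_rule by simp
  also have "\<dots> = \<phi> (g [^] Suc m) x"
    using nat_pow_Suc2[OF assms(2)] by simp
  finally show ?case .
qed

lemma periodic_orbit_iff:
  assumes "x \<in> E"
  shows "(quot_map G \<phi> T ^^ n) (orbit G \<phi> x) = orbit G \<phi> x
     \<longleftrightarrow> (\<exists>g \<in> carrier G. (T ^^ n) x = \<phi> g x)"
proof
  assume "(quot_map G \<phi> T ^^ n) (orbit G \<phi> x) = orbit G \<phi> x"
  then have "(T ^^ n) x \<in> orbit G \<phi> x"
    using funpow_quot_map_orbit orbit_refl funpow_closed assms by metis
  then show "\<exists>g \<in> carrier G. (T ^^ n) x = \<phi> g x"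
    unfolding orbit_def by blast
next
  assume "\<exists>g \<in> carrier G. (T ^^ n) x = \<phi> g x"
  then show "(quot_map G \<phi> T ^^ n) (orbit G \<phi> x) = orbit G \<phi> x"
    using funpow_quot_map_orbit orbit_action_eq assms by metis
qed

lemma periodic_orbits_subset:
  assumes "finite (carrier G)"
  shows "periodic_points (orbits G E \<phi>) (quot_map G \<phi> T) n
     \<subseteq> orbit G \<phi> ` (\<Union>k\<in>{1..max_elem_order G}. periodic_points E T (n * k))"
proof
  interpret group G
    using group_hom group_hom.axioms(1) by blast
  fix Orb assume "Orb \<in> periodic_points (orbits G E \<phi>) (quot_map G \<phi> T) n"
  then obtain x where x: "x \<in> E" "Orb = orbit G \<phi> x"
    and "(quot_map G \<phi> T ^^ n) (orbit G \<phi> x) = orbit G \<phi> x"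
    unfolding periodic_points_def orbits_def by blast
  then obtain g where g: "g \<in> carrier G" "(T ^^ n) x = \<phi> g x"
    using periodic_orbit_iff by blast
  have "(T ^^ (n * ord g)) x = \<phi> (g [^] ord g) x"
    using x(1) g by (rule funpow_mult_eq_action_pow)
  also have "\<dots> = x"
    using g(1) x(1) id_eq_one by (metis pow_ord_eq_1 restrict_apply')
  finally have "x \<in> periodic_points E T (n * ord g)"
    unfolding periodic_points_def using x(1) by blast
  moreover have "ord g \<in> {1..max_elem_order G}"
    using ord_pos ord_le_max_elem_order assms g(1) by (simp add: Suc_le_eq)
  ultimately show "Orb \<in> orbit G \<phi> ` (\<Union>k\<in>{1..max_elem_order G}. periodic_points E T (n * k))"
    using x(2) by blast
qed

lemma card_periodic_orbits_le_sum:
  assumes "finite (carrier G)"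
    and "\<And>k. k \<in> {1..max_elem_order G} \<Longrightarrow> finite (periodic_points E T (n * k))"
  shows "finite (periodic_points (orbits G E \<phi>) (quot_map G \<phi> T) n)"
    and "card (periodic_points (orbits G E \<phi>) (quot_map G \<phi> T) n)
           \<le> (\<Sum>k\<in>{1..max_elem_order G}. card (periodic_points E T (n * k)))"
proof -
  let ?U = "\<Union>k\<in>{1..max_elem_order G}. periodic_points E T (n * k)"
  have "finite ?U"
    using assms(2) by blast
  then show "finite (periodic_points (orbits G E \<phi>) (quot_map G \<phi> T) n)"
    using finite_subset[OF periodic_orbits_subset[OF assms(1)] finite_imageI] by blast
  have "card (periodic_points (orbits G E \<phi>) (quot_map G \<phi> T) n) \<le> card (orbit G \<phi> ` ?U)"
    using periodic_orbits_subset[OF assms(1)] \<open>finite ?U\<close> by (intro card_mono) auto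
  also have "\<dots> \<le> card ?U"
    by (rule card_image_le[OF \<open>finite ?U\<close>])
  also have "\<dots> \<le> (\<Sum>k\<in>{1..max_elem_order G}. card (periodic_points E T (n * k)))"
    by (rule card_UN_le) simp
  finally show "card (periodic_points (orbits G E \<phi>) (quot_map G \<phi> T) n)
           \<le> (\<Sum>k\<in>{1..max_elem_order G}. card (periodic_points E T (n * k)))" .
qed

lemma card_periodic_points_le_mult:
  assumes "finite (carrier G)"
    and "finite (periodic_points (orbits G E \<phi>) (quot_map G \<phi> T) n)"
  shows "card (periodic_points E T n)
           \<le> card (carrier G) * card (periodic_points (orbits G E \<phi>) (quot_map G \<phi> T) n)"
proof -
  let ?Q = "periodic_points (orbits G E \<phi>) (quot_map G \<phi> T) n"
  have orbits_finite: "finite Orb" if "Orb \<in> ?Q" for Orb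
    using that assms(1) unfolding periodic_points_def orbits_def orbit_def by auto
  have "periodic_points E T n \<subseteq> \<Union> ?Q"
  proof
    fix x assume "x \<in> periodic_points E T n"
    then have "x \<in> E" "orbit G \<phi> x \<in> ?Q"
      unfolding periodic_points_def orbits_def using funpow_quot_map_orbit by auto
    then show "x \<in> \<Union> ?Q"
      using orbit_refl by blast
  qed
  then have "card (periodic_points E T n) \<le> card (\<Union> ?Q)"
    using assms(2) orbits_finite by (intro card_mono) auto
  also have "\<dots> \<le> (\<Sum>Orb\<in>?Q. card Orb)"
    by (rule card_Union_le_sum_card)
  also have "\<dots> \<le> card ?Q * card (carrier G)"
    using sum_bounded_above[of ?Q card "card (carrier G)"] card_orbit_le[OF assms(1)]
    unfolding periodic_points_def orbits_def by fastforce
  finally show ?thesis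
    by (simp add: mult.commute)
qed

end

lemma ln_of_nat_nonneg: "0 \<le> ln (real (m :: nat))"
  by (cases "m = 0") auto

lemma growth_nonneg: "0 \<le> growth f"
  unfolding growth_def
  by (rule le_Limsup) (auto simp: zero_ereal_def ln_of_nat_nonneg)

lemma eventually_le_exp_of_growth_less:
  assumes "growth f < ereal b"
  shows "eventually (\<lambda>n. real (f n) \<le> exp (real n * b)) sequentially"
proof -
  have "eventually (\<lambda>n. ereal (ln (real (f n)) / real n) < ereal b) sequentially"
    using assms unfolding growth_def by (rule Limsup_lessD)
  with eventually_gt_at_top[of 0] show ?thesis
  proof eventually_elim
    case (elim n)
    show ?case
    proof (cases "f n = 0")
      case False
      then have "ln (real (f n)) \<le> real n * b"
        using elim by (simp add: divide_less_eq mult.commute)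
      with False show ?thesis
        by (metis exp_ln exp_le_cancel_iff of_nat_0_less_iff gr0I)
    qed simp
  qed
qed

text \<open>The hypotheses \<open>C \<ge> 1\<close> and \<open>b \<ge> 0\<close> cover the indices with \<open>q n = 0\<close>, where \<open>ln 0 = 0\<close>.\<close>

lemma growth_le_of_eventually_le_exp:
  assumes "C \<ge> 1" and "b \<ge> 0"
    and "eventually (\<lambda>n. real (q n) \<le> C * exp (real n * b)) sequentially"
  shows "growth q \<le> ereal b"
proof -
  have "eventually (\<lambda>n. ereal (ln (real (q n)) / real n) \<le> ereal (ln C / real n + b)) sequentially"
    using assms(3) eventually_gt_at_top[of 0]
  proof eventually_elim
    case (elim n)
    have "ln (real (q n)) \<le> ln C + real n * b"
    proof (cases "q n = 0")
      case False
      then have "ln (real (q n)) \<le> ln (C * exp (real n * b))"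
        using elim assms(1) by simp
      also have "\<dots> = ln C + real n * b"
        using assms(1) by (simp add: ln_mult)
      finally show ?thesis .
    qed (use assms in auto)
    with elim show ?case
      by (simp add: field_simps)
  qed
  then have "growth q \<le> limsup (\<lambda>n. ereal (ln C / real n + b))"
    unfolding growth_def by (rule Limsup_mono)
  also have "\<dots> = ereal b"
    using tendsto_add[OF lim_const_over_n[of "ln C"] tendsto_const[of b]]
    by (intro lim_imp_Limsup) auto
  finally show ?thesis .
qed

lemma growth_le_growth_of_le_const_mult:
  assumes "c \<ge> 1" and "\<And>n. n \<ge> 1 \<Longrightarrow> f n \<le> c * q n"
  shows "growth f \<le> growth q"
proof (rule ccontr)
  assume "\<not> growth f \<le> growth q"
  then obtain b where b: "growth q < ereal b" "ereal b < growth f"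
    by (meson ereal_dense2 not_le)
  have "b \<ge> 0"
    using le_less_trans[OF growth_nonneg b(1)] by simp
  have "eventually (\<lambda>n. real (f n) \<le> real c * exp (real n * b)) sequentially"
    using eventually_le_exp_of_growth_less[OF b(1)] eventually_ge_at_top[of 1]
  proof eventually_elim
    case (elim n)
    have "real (f n) \<le> real c * real (q n)"
      using assms(2)[OF elim(2)] by (metis of_nat_le_iff of_nat_mult)
    also have "\<dots> \<le> real c * exp (real n * b)"
      using elim(1) by (simp add: mult_left_mono)
    finally show ?case .
  qed
  then have "growth f \<le> ereal b"
    using assms(1) \<open>b \<ge> 0\<close> by (intro growth_le_of_eventually_le_exp) auto
  with b(2) show False by simp
qed

lemma growth_le_of_le_sum_dilations:
  assumes "N \<ge> 1" and "growth f \<le> ereal \<eta>"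
    and "\<And>n. n \<ge> 1 \<Longrightarrow> q n \<le> (\<Sum>k\<in>{1..N}. f (n * k))"
  shows "growth q \<le> ereal (real N * \<eta>)"
proof (rule ereal_le_epsilon2)
  fix e :: real assume "e > 0"
  define b where "b = \<eta> + e / real N"
  have "\<eta> \<ge> 0"
    using order_trans[OF growth_nonneg[of f] assms(2)] by simp
  then have "b \<ge> 0"
    using \<open>e > 0\<close> assms(1) by (simp add: b_def)
  have "growth f < ereal b"
    using assms(1,2) \<open>e > 0\<close> by (auto simp: b_def intro: le_less_trans)
  then obtain M where M: "\<And>m. m \<ge> M \<Longrightarrow> real (f m) \<le> exp (real m * b)"
    using eventually_le_exp_of_growth_less unfolding eventually_sequentially by blast
  have "eventually (\<lambda>n. real (q n) \<le> real N * exp (real n * (real N * b))) sequentially"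
    unfolding eventually_sequentially
  proof (intro exI allI impI)
    fix n assume n: "max M 1 \<le> n"
    have dilation_bound: "real (f (n * k)) \<le> exp (real n * (real N * b))" if "k \<in> {1..N}" for k
    proof -
      have "n \<le> n * k" "n * k \<le> n * N"
        using that by simp_all
      then have "real (f (n * k)) \<le> exp (real (n * k) * b)"
        using n by (intro M) linarith
      also have "\<dots> \<le> exp (real n * (real N * b))"
        using \<open>n * k \<le> n * N\<close> \<open>b \<ge> 0\<close>
        by (simp add: mult.assoc[symmetric] mult_right_mono flip: of_nat_mult)
      finally show ?thesis .
    qed
    have "real (q n) \<le> (\<Sum>k\<in>{1..N}. real (f (n * k)))"
      using assms(3)[of n] n by (metis max.bounded_iff of_nat_le_iff of_nat_sum)
    also have "\<dots> \<le> real N * exp (real n * (real N * b))"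
      using sum_bounded_above[of "{1..N}" "\<lambda>k. real (f (n * k))"] dilation_bound by simp
    finally show "real (q n) \<le> real N * exp (real n * (real N * b))" .
  qed
  then have "growth q \<le> ereal (real N * b)"
    using assms(1) \<open>b \<ge> 0\<close> by (intro growth_le_of_eventually_le_exp) auto
  also have "\<dots> = ereal (real N * \<eta>) + ereal e"
    using assms(1) by (simp add: b_def field_simps)
  finally show "growth q \<le> ereal (real N * \<eta>) + ereal e" .
qed

theorem corollary9:
  fixes X :: "'b::metric_space set" and T Tinv :: "'b \<Rightarrow> 'b"
    and G :: "('g, 'm) monoid_scheme" and \<phi> :: "'g \<Rightarrow> 'b \<Rightarrow> 'b" and \<eta> :: real
  assumes "compact X"
    and "homeomorphism X X T Tinv"
    and "\<And>n. n \<ge> 1 \<Longrightarrow> finite {x \<in> X. (T ^^ n) x = x}"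
    and "group G" and "finite (carrier G)"
    and "group_action G X \<phi>"
    and "\<And>g. g \<in> carrier G \<Longrightarrow> continuous_on X (\<phi> g)"
    and "\<And>g x. g \<in> carrier G \<Longrightarrow> x \<in> X \<Longrightarrow> \<phi> g (T x) = T (\<phi> g x)"
    and "\<eta> > 0"
    and "growth (fix_count X T) = ereal \<eta>"
  shows "ereal \<eta> \<le> growth (fix_count (quot_space G \<phi> X) (quot_map G \<phi> T))
       \<and> growth (fix_count (quot_space G \<phi> X) (quot_map G \<phi> T))
           \<le> ereal (real (max_elem_order G) * \<eta>)"
proof -
  interpret group G by fact
  have "equivariant_map G X \<phi> T"
    using assms(2,6,8) unfolding equivariant_map_def equivariant_map_axioms_def homeomorphism_def
    by blast
  then interpret equivariant_map G X \<phi> T .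
  have periodic_finite: "finite (periodic_points X T n)" if "n \<ge> 1" for n
    using assms(3) that unfolding periodic_points_def by blast
  note quot_bounds = card_periodic_orbits_le_sum[OF assms(5) periodic_finite]
  have "max_elem_order G \<ge> 1"
    using ord_pos[OF assms(5) one_closed] ord_le_max_elem_order[OF assms(5) one_closed] by linarith
  have "card (carrier G) \<ge> 1"
    using assms(5) one_closed by (metis One_nat_def Suc_leI card_gt_0_iff empty_iff)
  have "fix_count X T n \<le> card (carrier G) * fix_count (quot_space G \<phi> X) (quot_map G \<phi> T) n"
    if "n \<ge> 1" for n
    using card_periodic_points_le_mult[OF assms(5) quot_bounds(1)] that
    by (simp add: fix_count_eq_card_periodic_points quot_space_def)
  then have "ereal \<eta> \<le> growth (fix_count (quot_space G \<phi> X) (quot_map G \<phi> T))"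
    using growth_le_growth_of_le_const_mult[OF \<open>card (carrier G) \<ge> 1\<close>] assms(10) by metis
  moreover have "fix_count (quot_space G \<phi> X) (quot_map G \<phi> T) n
                   \<le> (\<Sum>k\<in>{1..max_elem_order G}. fix_count X T (n * k))" if "n \<ge> 1" for n
    using quot_bounds(2) that by (simp add: fix_count_eq_card_periodic_points quot_space_def)
  then have "growth (fix_count (quot_space G \<phi> X) (quot_map G \<phi> T))
               \<le> ereal (real (max_elem_order G) * \<eta>)"
    using growth_le_of_le_sum_dilations[OF \<open>max_elem_order G \<ge> 1\<close> assms(10)[THEN eq_refl]]
    by blast
  ultimately show ?thesis ..
qed

end
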